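(* Let $S\ge 2$, $\mathcal S=\{1,\dots,S\}$ and $T=3$. The union of the following two sets of moves is a Markov basis for the toric homogeneous Markov chain model on $\mathcal S^3$. (1) Crossing path swappings: for paths $\omega=(s_1,s_2,s_3)$, $\omega'=(s'_1,s'_2,s'_3)$ with $s_t=s'_t$ for some $t$, the move $e_\omega+e_{\omega'}-e_{\tilde\omega}-e_{\tilde\omega'}$ with $\tilde\omega=(s_1,\dots,s_t,s'_{t+1},\dots,s'_3)$, $\tilde\omega'=(s'_1,\dots,s'_t,s_{t+1},\dots,s_3)$. (2) $m$ by $m$ permutations $\mathcal Z(i_1,\dots,i_m;j_1,\dots,j_m)$, for all $m=2,\dots,S$, all distinct $i_1,\dots,i_m\in\mathcal S$ and all distinct $j_1,\dots,j_m\in\mathcal S$: setting $j_0:=j_m$, for arbitrary states $a_1,\dots,a_m,b_1,\dots,b_m\in\mathcal S$ these are the moves $$\sum_{l=1}^m\Big(e_{(i_l,j_l,a_l)}+e_{(b_l,i_l,j_{l-1})}-e_{(i_l,j_{l-1},a_{\sigma(l)})}-e_{(b_l,i_l,j_l)}\Big),$$ where $\sigma(l)=l-1$ for $l\ge2$ and $\sigma(1)=m$. In words: the transitions $i_1\to j_1,\dots,i_m\to j_m$ at time $1$ are exchanged with the transitions $i_1\to j_m, i_2\to j_1,\dots,i_m\to j_{m-1}$ at time $2$.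
   Context: Paths are elements $\omega=(\omega_1,\omega_2,\omega_3)$ of $\mathcal S^3$; a contingency table is a function $\mathbf x:\mathcal S^3\to\mathbb Z_{\ge 0}$, and $e_\omega$ denotes the table with a single path $\omega$. The toric homogeneous Markov chain (THMC) model assigns $p(\omega)=c\,\gamma_{\omega_1}\beta_{\omega_1\omega_2}\beta_{\omega_2\omega_3}$ with free nonnegative parameters; its sufficient statistic for a table $\mathbf x$ is $\mathbf b(\mathbf x)=A\mathbf x$ consisting of the initial-state counts $x^1_i=\sum_{\omega:\omega_1=i}x(\omega)$ and the total transition counts $x^+_{ij}=\sum_\omega x(\omega)\,\#\{t\in\{1,2\}:\omega_t=i,\omega_{t+1}=j\}$. The fiber of $\mathbf b$ is $\{\mathbf x\ge 0 \text{ integer}: A\mathbf x=\mathbf b\}$. A move is an integer function $\mathbf z$ with $A\mathbf z=0$. A set $\mathcal B$ of moves is a Markov basis if for every $\mathbf b$ and every $\mathbf x,\mathbf y$ in the fiber of $\mathbf b$ there are $\mathbf z_1,\dots,\mathbf z_K\in\mathcal B\cup(-\mathcal B)$ with $\mathbf y=\mathbf x+\sum_{k}\mathbf z_k$ and all partial sums $\mathbf x+\sum_{k\le h}\mathbf z_k\ge0$. *)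

theory Defs
  imports Main
begin

type_synonym path = "nat \<times> nat \<times> nat"
type_synonym table = "path \<Rightarrow> int"

definition states :: "nat \<Rightarrow> nat set" where
  "states S = {1..S}"

definition paths :: "nat \<Rightarrow> path set" where
  "paths S = states S \<times> states S \<times> states S"

fun pcomp :: "path \<Rightarrow> nat \<Rightarrow> nat" where
  "pcomp (a, b, c) t = (if t = 1 then a else if t = 2 then b else c)"

definition e :: "path \<Rightarrow> table" where
  "e w = (\<lambda>v. if v = w then 1 else 0)"

text \<open>Sufficient statistic: initial-state counts and total transition counts.\<close>
definition init_count :: "nat \<Rightarrow> table \<Rightarrow> nat \<Rightarrow> int" where
  "init_count S x i = (\<Sum>w\<in>{w\<in>paths S. pcomp w 1 = i}. x w)"

definition trans_count :: "nat \<Rightarrow> table \<Rightarrow> nat \<Rightarrow> nat \<Rightarrow> int" where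
  "trans_count S x i j =
     (\<Sum>w\<in>paths S. x w * int (card {t\<in>{1,2}. pcomp w t = i \<and> pcomp w (t+1) = j}))"

definition same_stat :: "nat \<Rightarrow> table \<Rightarrow> table \<Rightarrow> bool" where
  "same_stat S x y \<longleftrightarrow>
     (\<forall>i\<in>states S. init_count S x i = init_count S y i) \<and>
     (\<forall>i\<in>states S. \<forall>j\<in>states S. trans_count S x i j = trans_count S y i j)"

definition supported :: "nat \<Rightarrow> table \<Rightarrow> bool" where
  "supported S x \<longleftrightarrow> (\<forall>w. w \<notin> paths S \<longrightarrow> x w = 0)"

definition cont_table :: "nat \<Rightarrow> table \<Rightarrow> bool" where
  "cont_table S x \<longleftrightarrow> supported S x \<and> (\<forall>w. 0 \<le> x w)"

definition is_move :: "nat \<Rightarrow> table \<Rightarrow> bool" where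
  "is_move S z \<longleftrightarrow> supported S z \<and> same_stat S z (\<lambda>_. 0)"

definition markov_basis :: "nat \<Rightarrow> table set \<Rightarrow> bool" where
  "markov_basis S B \<longleftrightarrow>
     (\<forall>z\<in>B. is_move S z) \<and>
     (\<forall>x y. cont_table S x \<and> cont_table S y \<and> same_stat S x y \<longrightarrow>
        (\<exists>zs. set zs \<subseteq> B \<union> (\<lambda>z. (\<lambda>w. - z w)) ` B \<and>
              (\<forall>w. y w = x w + (\<Sum>k<length zs. (zs ! k) w)) \<and>
              (\<forall>h\<le>length zs. \<forall>w. 0 \<le> x w + (\<Sum>k<h. (zs ! k) w))))"

definition swap_path :: "nat \<Rightarrow> path \<Rightarrow> path \<Rightarrow> path" where
  "swap_path t w w' =
     (let c = (\<lambda>k. if k \<le> t then pcomp w k else pcomp w' k) in (c 1, c 2, c 3))"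

definition crossing_swaps :: "nat \<Rightarrow> table set" where
  "crossing_swaps S = {(\<lambda>v. e w v + e w' v - e (swap_path t w w') v - e (swap_path t w' w) v)
     | w w' t. w \<in> paths S \<and> w' \<in> paths S \<and> t \<in> {1,2,3} \<and> pcomp w t = pcomp w' t}"

definition perm_move :: "nat \<Rightarrow> (nat \<Rightarrow> nat) \<Rightarrow> (nat \<Rightarrow> nat) \<Rightarrow> (nat \<Rightarrow> nat) \<Rightarrow> (nat \<Rightarrow> nat) \<Rightarrow> table" where
  "perm_move m i j a b =
     (let jprev = (\<lambda>l. if l = 1 then j m else j (l - 1));
          sig = (\<lambda>l. if l = 1 then m else l - 1)
      in (\<lambda>v. \<Sum>l\<in>{1..m}. e (i l, j l, a l) v + e (b l, i l, jprev l) v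
                          - e (i l, jprev l, a (sig l)) v - e (b l, i l, j l) v))"

definition perm_moves :: "nat \<Rightarrow> table set" where
  "perm_moves S = {perm_move m i j a b | m i j a b.
     2 \<le> m \<and> m \<le> S \<and>
     inj_on i {1..m} \<and> i ` {1..m} \<subseteq> states S \<and>
     inj_on j {1..m} \<and> j ` {1..m} \<subseteq> states S \<and>
     a ` {1..m} \<subseteq> states S \<and> b ` {1..m} \<subseteq> states S}"

end

theory Submission
  imports Defs
begin

text \<open>Two tables with the same sufficient statistic have the same initial counts and the same
  sums of time-1 and time-2 transition counts. The difference \<open>D\<close> of their time-1 transition
  count matrices therefore has zero row and column sums, so it contains an alternating cycle of
  positive entries \<open>D(i\<^sub>l, j\<^sub>l)\<close> and negative entries \<open>D(i\<^sub>l, j\<^sub>l\<^sub>-\<^sub>1)\<close>. The corresponding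
  \<open>m\<close> by \<open>m\<close> permutation move, with its free states chosen so that it applies, strictly
  decreases \<open>\<Sum>|D|\<close>. Once the time-1, and hence also the time-2, transition counts agree, a path
  \<open>(u, v, w)\<close> of the target is created in the source by a crossing swap at time 2 of paths
  \<open>(u, v, c)\<close> and \<open>(a, v, w)\<close>; removing it from both tables gives an induction on the sample
  size.\<close>

section \<open>Walks through nonnegative tables\<close>

abbreviation nonneg :: "table \<Rightarrow> bool" where
  "nonneg x \<equiv> \<forall>w. 0 \<le> x w"

inductive walk :: "table set \<Rightarrow> table \<Rightarrow> table \<Rightarrow> bool" for M :: "table set" where
  walk_refl: "nonneg x \<Longrightarrow> walk M x x"
| walk_step: "z \<in> M \<Longrightarrow> nonneg x \<Longrightarrow> nonneg (\<lambda>w. x w + z w) \<Longrightarrow>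
    walk M (\<lambda>w. x w + z w) y \<Longrightarrow> walk M x y"

lemma walk_trans:
  assumes "walk M x y" and "walk M y u"
  shows "walk M x u"
  using assms
proof (induction rule: walk.induct)
  case (walk_step z x y)
  from walk_step.hyps(1-3) walk_step.IH[OF walk_step.prems] show ?case
    by (rule walk.walk_step)
qed simp

lemma walk_move:
  assumes "z \<in> M" and "nonneg x" and "nonneg (\<lambda>w. x w + z w)"
  shows "walk M x (\<lambda>w. x w + z w)"
  using assms walk.walk_refl[OF assms(3)] by (rule walk.walk_step)

lemma walk_mono:
  assumes "walk M x y" and "M \<subseteq> N"
  shows "walk N x y"
  using assms(1)
proof (induction rule: walk.induct)
  case (walk_step z x y)
  from subsetD[OF assms(2) walk_step.hyps(1)] walk_step.hyps(2,3) walk_step.IH show ?case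
    by (rule walk.walk_step)
qed (rule walk.walk_refl)

lemma walk_add:
  assumes "walk M x y" and "nonneg u"
  shows "walk M (\<lambda>w. x w + u w) (\<lambda>w. y w + u w)"
  using assms(1)
proof (induction rule: walk.induct)
  case (walk_refl x)
  then show ?case using assms(2) by (simp add: walk.walk_refl)
next
  case (walk_step z x y)
  have "nonneg (\<lambda>w. x w + u w)" "nonneg (\<lambda>w. x w + u w + z w)"
    using walk_step.hyps(2,3) assms(2) by (metis add_nonneg_nonneg add.commute add.left_commute)+
  moreover have "(\<lambda>w. x w + u w + z w) = (\<lambda>w. x w + z w + u w)"
    by (simp add: algebra_simps)
  ultimately show ?case
    using walk_step.hyps(1) walk_step.IH by (simp add: walk.walk_step)
qed

lemma walk_imp_move_sequence:
  assumes "walk M x y"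
  shows "\<exists>zs. set zs \<subseteq> M \<and> (\<forall>w. y w = x w + (\<Sum>k<length zs. (zs ! k) w)) \<and>
              (\<forall>h\<le>length zs. \<forall>w. 0 \<le> x w + (\<Sum>k<h. (zs ! k) w))"
  using assms
proof (induction rule: walk.induct)
  case (walk_refl x)
  then show ?case by (intro exI[of _ "[]"]) auto
next
  case (walk_step z x y)
  then obtain zs where zs: "set zs \<subseteq> M" "\<forall>w. y w = x w + z w + (\<Sum>k<length zs. (zs ! k) w)"
    "\<forall>h\<le>length zs. \<forall>w. 0 \<le> x w + z w + (\<Sum>k<h. (zs ! k) w)" by auto
  have Cons_sum: "(\<Sum>k<Suc h. ((z # zs) ! k) w) = z w + (\<Sum>k<h. (zs ! k) w)" for h w
    by (subst sum.lessThan_Suc_shift) simp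
  show ?case
  proof (intro exI[of _ "z # zs"] conjI allI impI)
    show "set (z # zs) \<subseteq> M" using zs walk_step by auto
    show "y w = x w + (\<Sum>k<length (z # zs). ((z # zs) ! k) w)" for w
      using zs(2) by (simp only: length_Cons Cons_sum add.assoc)
  next
    fix h w assume h: "h \<le> length (z # zs)"
    show "0 \<le> x w + (\<Sum>k<h. ((z # zs) ! k) w)"
    proof (cases h)
      case 0
      have "0 \<le> x w" using walk_step(2) by blast
      with 0 show ?thesis by simp
    next
      case (Suc h')
      then have "h' \<le> length zs" using h by simp
      then have "0 \<le> x w + z w + (\<Sum>k<h'. (zs ! k) w)" using zs(3) by blast
      then show ?thesis using Suc by (simp only: Cons_sum add.assoc)
    qed
  qed
qed

section \<open>Alternating cycles in integer matrices with zero margins\<close>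

text \<open>\<open>cpred m\<close> is the cyclic predecessor on \<open>{1..m}\<close>: in the permutation moves,
  \<open>j\<^sub>l\<^sub>-\<^sub>1 = j (cpred m l)\<close> (with \<open>j\<^sub>0 = j\<^sub>m\<close>) and \<open>\<sigma>(l) = cpred m l\<close>.\<close>

definition cpred :: "nat \<Rightarrow> nat \<Rightarrow> nat" where
  "cpred m l = (if l = 1 then m else l - 1)"

lemma cpred_mem: "1 \<le> m \<Longrightarrow> l \<in> {1..m} \<Longrightarrow> cpred m l \<in> {1..m}"
  by (auto simp: cpred_def)

lemma cpred_neq: "2 \<le> m \<Longrightarrow> l \<in> {1..m} \<Longrightarrow> cpred m l \<noteq> l"
  by (auto simp: cpred_def)

lemma bij_cpred:
  assumes "1 \<le> m"
  shows "bij_betw (cpred m) {1..m} {1..m}"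
proof (rule bij_betw_imageI)
  show "inj_on (cpred m) {1..m}"
    by (auto simp: inj_on_def cpred_def)
  have "{1..m} \<subseteq> cpred m ` {1..m}"
  proof
    fix k assume k: "k \<in> {1..m}"
    show "k \<in> cpred m ` {1..m}"
    proof (cases "k = m")
      case True
      then show ?thesis using assms by (auto simp: cpred_def intro!: image_eqI[of _ _ 1])
    next
      case False
      then show ?thesis using k by (auto simp: cpred_def intro!: image_eqI[of _ _ "k + 1"])
    qed
  qed
  moreover have "cpred m ` {1..m} \<subseteq> {1..m}"
    using cpred_mem[OF assms] by (rule image_subsetI)
  ultimately show "cpred m ` {1..m} = {1..m}"
    by (rule subset_antisym[rotated])
qed

lemma sum_eq_0_neg_imp_pos:
  fixes F :: "'a \<Rightarrow> int"
  assumes "finite A" "(\<Sum>a\<in>A. F a) = 0" "a0 \<in> A" "F a0 < 0"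
  shows "\<exists>a\<in>A. 0 < F a"
proof (rule ccontr)
  assume "\<not> (\<exists>a\<in>A. 0 < F a)"
  then have "(\<Sum>a\<in>A - {a0}. F a) \<le> 0" by (intro sum_nonpos) auto
  moreover have "(\<Sum>a\<in>A. F a) = F a0 + (\<Sum>a\<in>A - {a0}. F a)"
    using assms(1,3) by (rule sum.remove)
  ultimately show False using assms(2,4) by linarith
qed

lemma funpow_cycle:
  assumes "finite R" "r0 \<in> R" "\<And>r. r \<in> R \<Longrightarrow> h r \<in> R"
  obtains r m where "r \<in> R" "0 < m" "(h ^^ m) r = r" "inj_on (\<lambda>k. (h ^^ k) r) {..<m}"
proof -
  have orbit: "(h ^^ k) r0 \<in> R" for k
    by (induction k) (auto simp: assms)
  have "\<not> inj_on (\<lambda>k. (h ^^ k) r0) {0..card R}"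
  proof
    assume "inj_on (\<lambda>k. (h ^^ k) r0) {0..card R}"
    from card_inj_on_le[OF this _ assms(1)] orbit show False by auto
  qed
  then obtain k1 k2 where k: "k1 < k2" "(h ^^ k1) r0 = (h ^^ k2) r0"
    unfolding inj_on_def by (metis linorder_neqE_nat)
  define r where "r = (h ^^ k1) r0"
  have "(h ^^ (k2 - k1)) r = (h ^^ (k2 - k1 + k1)) r0"
    unfolding r_def by (simp only: funpow_add o_apply)
  then have "(h ^^ (k2 - k1)) r = r"
    using k unfolding r_def by simp
  define m where "m = (LEAST p. 0 < p \<and> (h ^^ p) r = r)"
  have m: "0 < m" "(h ^^ m) r = r"
    using LeastI[of "\<lambda>p. 0 < p \<and> (h ^^ p) r = r" "k2 - k1"] \<open>(h ^^ (k2 - k1)) r = r\<close> k(1)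
    unfolding m_def by auto
  have distinct: "(h ^^ s) r \<noteq> (h ^^ t) r" if "s < t" "t < m" for s t
  proof
    assume "(h ^^ s) r = (h ^^ t) r"
    then have "(h ^^ (m - t + s)) r = (h ^^ (m - t)) ((h ^^ t) r)"
      by (simp add: funpow_add)
    also have "\<dots> = r"
      using that m(2) by (simp add: funpow_add[symmetric, THEN fun_cong, simplified])
    finally have "(h ^^ (m - t + s)) r = r" .
    moreover have "0 < m - t + s" "m - t + s < m" using that by linarith+
    ultimately show False
      using not_less_Least[of "m - t + s" "\<lambda>p. 0 < p \<and> (h ^^ p) r = r"] unfolding m_def by blast
  qed
  have inj: "inj_on (\<lambda>k. (h ^^ k) r) {..<m}"
  proof (rule inj_onI)
    fix s t assume "s \<in> {..<m}" "t \<in> {..<m}" "(h ^^ s) r = (h ^^ t) r"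
    then show "s = t"
      using distinct[of s t] distinct[of t s] by (cases s t rule: linorder_cases) auto
  qed
  have "r \<in> R" unfolding r_def by (rule orbit)
  from this m inj show ?thesis by (rule that)
qed

lemma self_map_cyclic_sequence:
  assumes "finite R" "r0 \<in> R" "\<And>r. r \<in> R \<Longrightarrow> h r \<in> R"
  obtains m i where "1 \<le> m" "i ` {1..m} \<subseteq> R" "inj_on i {1..m}"
    "\<And>l. l \<in> {1..m} \<Longrightarrow> h (i (cpred m l)) = i l"
proof -
  obtain r m where r: "r \<in> R" "0 < m" "(h ^^ m) r = r" and inj: "inj_on (\<lambda>k. (h ^^ k) r) {..<m}"
    by (rule funpow_cycle[OF assms])
  define i where "i l = (h ^^ (l - 1)) r" for l
  have "(h ^^ k) r \<in> R" for k
    by (induction k) (simp_all add: r assms(3))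
  then have "i ` {1..m} \<subseteq> R" unfolding i_def by auto
  moreover have "inj_on i {1..m}"
  proof (rule inj_onI)
    fix l l' assume "l \<in> {1..m}" "l' \<in> {1..m}" "i l = i l'"
    with inj have "l - 1 = l' - 1" unfolding i_def by (auto dest: inj_onD)
    with \<open>l \<in> {1..m}\<close> \<open>l' \<in> {1..m}\<close> show "l = l'" by auto
  qed
  moreover have "h (i (cpred m l)) = i l" if "l \<in> {1..m}" for l
  proof (cases "l = 1")
    case True
    have "h ((h ^^ (m - 1)) r) = (h ^^ Suc (m - 1)) r" by simp
    with True r(2,3) show ?thesis by (simp add: cpred_def i_def)
  next
    case False
    with that have "1 < l" by simp
    then obtain k where "l = Suc (1 + k)" using less_imp_Suc_add by blast
    then show ?thesis by (simp add: cpred_def i_def)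
  qed
  ultimately show ?thesis using r(2) by (intro that[of m i]) auto
qed

lemma cyclic_sequence_step_inj:
  assumes m: "1 \<le> m" and inj: "inj_on i {1..m}"
    and cycle: "\<And>l. l \<in> {1..m} \<Longrightarrow> h (i (cpred m l)) = i l"
  shows "inj_on (\<lambda>l. h (i l)) {1..m}"
proof (rule inj_onI)
  fix l l' assume l: "l \<in> {1..m}" "l' \<in> {1..m}" "h (i l) = h (i l')"
  have "cpred m ` {1..m} = {1..m}"
    using bij_cpred[OF m] by (simp add: bij_betw_def)
  with l(1,2) have "l \<in> cpred m ` {1..m}" "l' \<in> cpred m ` {1..m}" by simp_all
  then obtain k k' where k: "l = cpred m k" "k \<in> {1..m}" and k': "l' = cpred m k'" "k' \<in> {1..m}"
    by (elim imageE)
  have "i k = i k'"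
    using cycle[OF k(2)] cycle[OF k'(2)] l(3) k(1) k'(1) by metis
  with inj k k' show "l = l'" by (auto dest: inj_onD)
qed

lemma zero_margins_sign_choice:
  fixes D :: "'a \<Rightarrow> 'a \<Rightarrow> int"
  assumes fin: "finite A"
    and rows: "\<And>i. i \<in> A \<Longrightarrow> (\<Sum>j\<in>A. D i j) = 0"
    and cols: "\<And>j. j \<in> A \<Longrightarrow> (\<Sum>i\<in>A. D i j) = 0"
  obtains f g where
    "\<forall>r\<in>A. (\<exists>c\<in>A. D r c < 0) \<longrightarrow> f r \<in> A \<and> 0 < D r (f r)"
    "\<forall>c\<in>A. (\<exists>r\<in>A. 0 < D r c) \<longrightarrow> g c \<in> A \<and> D (g c) c < 0"
proof -
  define f where "f r = (SOME c. c \<in> A \<and> 0 < D r c)" for r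
  define g where "g c = (SOME r. r \<in> A \<and> D r c < 0)" for c
  have "\<forall>r\<in>A. (\<exists>c\<in>A. D r c < 0) \<longrightarrow> f r \<in> A \<and> 0 < D r (f r)"
  proof (intro ballI impI)
    fix r assume "r \<in> A" "\<exists>c\<in>A. D r c < 0"
    then have "\<exists>c. c \<in> A \<and> 0 < D r c"
      using sum_eq_0_neg_imp_pos[OF fin rows[OF \<open>r \<in> A\<close>]] by blast
    then show "f r \<in> A \<and> 0 < D r (f r)" unfolding f_def by (rule someI_ex)
  qed
  moreover have "\<forall>c\<in>A. (\<exists>r\<in>A. 0 < D r c) \<longrightarrow> g c \<in> A \<and> D (g c) c < 0"
  proof (intro ballI impI)
    fix c assume "c \<in> A" "\<exists>r\<in>A. 0 < D r c"
    moreover have "(\<Sum>i\<in>A. - D i c) = 0"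
      using cols[OF \<open>c \<in> A\<close>] by (simp add: sum_negf)
    ultimately have "\<exists>r. r \<in> A \<and> D r c < 0"
      using sum_eq_0_neg_imp_pos[OF fin, of "\<lambda>i. - D i c"] by fastforce
    then show "g c \<in> A \<and> D (g c) c < 0" unfolding g_def by (rule someI_ex)
  qed
  ultimately show ?thesis by (rule that)
qed

lemma alternating_cycle_of_sign_choice:
  fixes D :: "'a \<Rightarrow> 'a \<Rightarrow> int"
  assumes fin: "finite A" and start: "r0 \<in> A" "c0 \<in> A" "D r0 c0 < 0"
    and f: "\<forall>r\<in>A. (\<exists>c\<in>A. D r c < 0) \<longrightarrow> f r \<in> A \<and> 0 < D r (f r)"
    and g: "\<forall>c\<in>A. (\<exists>r\<in>A. 0 < D r c) \<longrightarrow> g c \<in> A \<and> D (g c) c < 0"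
  obtains m i j where "2 \<le> m" "m \<le> card A" "inj_on i {1..m}" "inj_on j {1..m}"
    "i ` {1..m} \<subseteq> A" "j ` {1..m} \<subseteq> A"
    "\<And>l. l \<in> {1..m} \<Longrightarrow> 0 < D (i l) (j l)"
    "\<And>l. l \<in> {1..m} \<Longrightarrow> D (i l) (j (cpred m l)) < 0"
proof -
  define R where "R = {r \<in> A. \<exists>c\<in>A. D r c < 0}"
  define h where "h r = g (f r)" for r
  have f_R: "f r \<in> A" "0 < D r (f r)" if "r \<in> R" for r
    using f that unfolding R_def by blast+
  have h_R: "h r \<in> R" "D (h r) (f r) < 0" if "r \<in> R" for r
    using g f_R[OF that] that unfolding h_def R_def by blast+
  have "r0 \<in> R" using start unfolding R_def by blast
  moreover have "finite R" using fin by (simp add: R_def)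
  ultimately obtain m i where m: "1 \<le> m" and i: "i ` {1..m} \<subseteq> R" "inj_on i {1..m}"
    and cycle: "\<And>l. l \<in> {1..m} \<Longrightarrow> h (i (cpred m l)) = i l"
    using self_map_cyclic_sequence[of R r0 h] h_R by blast
  define j where "j l = f (i l)" for l
  have i_R: "i l \<in> R" if "l \<in> {1..m}" for l
    using i(1) that by auto
  have pos: "0 < D (i l) (j l)" if "l \<in> {1..m}" for l
    using f_R(2)[OF i_R[OF that]] unfolding j_def .
  have neg: "D (i l) (j (cpred m l)) < 0" if "l \<in> {1..m}" for l
    using h_R(2)[OF i_R[OF cpred_mem[OF m that]]] cycle[OF that] unfolding j_def by simp
  have "2 \<le> m"
  proof (rule ccontr)
    assume "\<not> 2 \<le> m"
    with m have "m = 1" by simp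
    with pos[of 1] neg[of 1] show False by (simp add: cpred_def)
  qed
  moreover have "inj_on j {1..m}"
  proof (rule inj_on_imageI2)
    show "inj_on (g \<circ> j) {1..m}"
      using cyclic_sequence_step_inj[OF m i(2) cycle] unfolding j_def h_def comp_def .
  qed
  moreover have "m \<le> card A"
    using card_inj_on_le[OF i(2) _ fin] i(1) unfolding R_def by auto
  ultimately show ?thesis
    using i f_R pos neg by (intro that[of m i j]) (auto simp: j_def R_def)
qed

lemma zero_margins_alternating_cycle:
  fixes D :: "'a \<Rightarrow> 'a \<Rightarrow> int"
  assumes fin: "finite A"
    and rows: "\<And>i. i \<in> A \<Longrightarrow> (\<Sum>j\<in>A. D i j) = 0"
    and cols: "\<And>j. j \<in> A \<Longrightarrow> (\<Sum>i\<in>A. D i j) = 0"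
    and nonzero: "p \<in> A" "q \<in> A" "D p q \<noteq> 0"
  obtains m i j where "2 \<le> m" "m \<le> card A" "inj_on i {1..m}" "inj_on j {1..m}"
    "i ` {1..m} \<subseteq> A" "j ` {1..m} \<subseteq> A"
    "\<And>l. l \<in> {1..m} \<Longrightarrow> 0 < D (i l) (j l)"
    "\<And>l. l \<in> {1..m} \<Longrightarrow> D (i l) (j (cpred m l)) < 0"
proof -
  obtain f g where f: "\<forall>r\<in>A. (\<exists>c\<in>A. D r c < 0) \<longrightarrow> f r \<in> A \<and> 0 < D r (f r)"
    and g: "\<forall>c\<in>A. (\<exists>r\<in>A. 0 < D r c) \<longrightarrow> g c \<in> A \<and> D (g c) c < 0"
    using zero_margins_sign_choice[OF fin rows cols] by blast
  obtain r0 c0 where start: "r0 \<in> A" "c0 \<in> A" "D r0 c0 < 0"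
  proof (cases "D p q < 0")
    case True
    with nonzero show ?thesis by (intro that[of p q]) auto
  next
    case False
    with nonzero have "0 < D p q" by simp
    with nonzero g have "g q \<in> A" "D (g q) q < 0" by blast+
    with nonzero show ?thesis by (intro that[of "g q" q])
  qed
  show ?thesis
    by (rule alternating_cycle_of_sign_choice[where D = D, OF fin start f g]) (rule that)
qed

lemma sum_abs_diff_less:
  fixes d e :: "'a \<Rightarrow> int"
  assumes "finite K" "k0 \<in> K" "e k0 \<noteq> 0"
    and "\<And>k. k \<in> K \<Longrightarrow> e k = 0 \<or> (e k = 1 \<and> 0 < d k) \<or> (e k = -1 \<and> d k < 0)"
  shows "(\<Sum>k\<in>K. \<bar>d k - e k\<bar>) < (\<Sum>k\<in>K. \<bar>d k\<bar>)"
proof (rule sum_strict_mono_ex1[OF assms(1)])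
  show "\<forall>k\<in>K. \<bar>d k - e k\<bar> \<le> \<bar>d k\<bar>" using assms(4) by fastforce
  show "\<exists>k\<in>K. \<bar>d k - e k\<bar> < \<bar>d k\<bar>"
    using assms(3) assms(4)[OF assms(2)] by (intro bexI[OF _ assms(2)]) auto
qed

section \<open>Linear statistics of tables\<close>

definition wsum :: "nat \<Rightarrow> (path \<Rightarrow> int) \<Rightarrow> table \<Rightarrow> int" where
  "wsum S f x = (\<Sum>v\<in>paths S. x v * f v)"

definition initial :: "nat \<Rightarrow> path \<Rightarrow> int" where
  "initial i v = (if pcomp v 1 = i then 1 else 0)"

definition first_step :: "nat \<Rightarrow> nat \<Rightarrow> path \<Rightarrow> int" where
  "first_step i j v = (if pcomp v 1 = i \<and> pcomp v 2 = j then 1 else 0)"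

definition second_step :: "nat \<Rightarrow> nat \<Rightarrow> path \<Rightarrow> int" where
  "second_step i j v = (if pcomp v 2 = i \<and> pcomp v 3 = j then 1 else 0)"

abbreviation first_count :: "nat \<Rightarrow> table \<Rightarrow> nat \<Rightarrow> nat \<Rightarrow> int" where
  "first_count S x i j \<equiv> wsum S (first_step i j) x"

abbreviation second_count :: "nat \<Rightarrow> table \<Rightarrow> nat \<Rightarrow> nat \<Rightarrow> int" where
  "second_count S x i j \<equiv> wsum S (second_step i j) x"

abbreviation total :: "nat \<Rightarrow> table \<Rightarrow> int" where
  "total S x \<equiv> wsum S (\<lambda>_. 1) x"

lemma pcomp_simps [simp]: "pcomp (a, b, c) 1 = a" "pcomp (a, b, c) 2 = b" "pcomp (a, b, c) 3 = c"
  by auto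

lemma finite_states [simp]: "finite (states S)"
  by (simp add: states_def)

lemma finite_paths [simp]: "finite (paths S)"
  by (simp add: paths_def)

lemma mem_paths [simp]: "(a, b, c) \<in> paths S \<longleftrightarrow> a \<in> states S \<and> b \<in> states S \<and> c \<in> states S"
  by (simp add: paths_def)

lemma e_nonneg: "0 \<le> e w v"
  by (simp add: e_def)

lemma e_nonneg_all: "nonneg (e w)"
  by (simp add: e_def)

lemma e_outside_paths: "w \<in> paths S \<Longrightarrow> v \<notin> paths S \<Longrightarrow> e w v = 0"
  by (auto simp: e_def)

lemma wsum_add: "wsum S f (\<lambda>v. x v + y v) = wsum S f x + wsum S f y"
  by (simp add: wsum_def distrib_right sum.distrib)

lemma wsum_diff: "wsum S f (\<lambda>v. x v - y v) = wsum S f x - wsum S f y"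
  by (simp add: wsum_def left_diff_distrib sum_subtractf)

lemma wsum_zero: "wsum S f (\<lambda>v. 0) = 0"
  by (simp add: wsum_def)

lemma wsum_sum: "finite L \<Longrightarrow> wsum S f (\<lambda>v. \<Sum>l\<in>L. g l v) = (\<Sum>l\<in>L. wsum S f (g l))"
  unfolding wsum_def by (simp add: sum_distrib_right sum.swap[of _ "paths S"])

lemma wsum_e: "w \<in> paths S \<Longrightarrow> wsum S f (e w) = f w"
proof -
  assume w: "w \<in> paths S"
  have "wsum S f (e w) = (\<Sum>v\<in>paths S. if v = w then f w else 0)"
    unfolding wsum_def e_def by (rule sum.cong) auto
  also have "\<dots> = f w" using w by simp
  finally show ?thesis .
qed

lemma wsum_weight_add: "wsum S (\<lambda>v. f v + g v) x = wsum S f x + wsum S g x"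
  by (simp add: wsum_def distrib_left sum.distrib)

lemma wsum_weight_sum: "finite K \<Longrightarrow> wsum S (\<lambda>v. \<Sum>k\<in>K. f k v) x = (\<Sum>k\<in>K. wsum S (f k) x)"
  unfolding wsum_def by (simp add: sum_distrib_left sum.swap[of _ K])

lemma wsum_weight_cong: "(\<And>v. v \<in> paths S \<Longrightarrow> f v = g v) \<Longrightarrow> wsum S f x = wsum S g x"
  unfolding wsum_def by (rule sum.cong) auto

lemma wsum_nonneg: "nonneg x \<Longrightarrow> (\<And>v. 0 \<le> f v) \<Longrightarrow> 0 \<le> wsum S f x"
  unfolding wsum_def by (intro sum_nonneg mult_nonneg_nonneg) auto

lemma wsum_ge_term: "nonneg x \<Longrightarrow> (\<And>v. 0 \<le> f v) \<Longrightarrow> v \<in> paths S \<Longrightarrow> x v * f v \<le> wsum S f x"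
  unfolding wsum_def by (rule member_le_sum) auto

lemma wsum_pos_imp_ex: "0 < wsum S f x \<Longrightarrow> \<exists>v\<in>paths S. 0 < x v * f v"
proof (rule ccontr)
  assume "0 < wsum S f x" "\<not> (\<exists>v\<in>paths S. 0 < x v * f v)"
  then have "wsum S f x \<le> 0" unfolding wsum_def by (intro sum_nonpos) auto
  with \<open>0 < wsum S f x\<close> show False by simp
qed

lemma sum_e_inj:
  assumes "finite K" and "inj_on G K"
  shows "(\<Sum>k\<in>K. e (G k) v) = (if v \<in> G ` K then 1 else 0)"
proof (cases "v \<in> G ` K")
  case True
  then obtain k0 where k0: "k0 \<in> K" "v = G k0" by blast
  have "e (G k) v = (if k = k0 then 1 else 0)" if "k \<in> K" for k
    using that k0 inj_onD[OF assms(2), of k k0] by (auto simp: e_def)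
  then have "(\<Sum>k\<in>K. e (G k) v) = (\<Sum>k\<in>K. if k = k0 then 1 else 0)"
    by (rule sum.cong[OF refl])
  with k0 assms(1) True show ?thesis by simp
next
  case False
  then show ?thesis by (auto simp: e_def intro!: sum.neutral)
qed

lemma nonneg_add_signed_e_sum:
  fixes A B P Q :: "'i \<Rightarrow> path"
  assumes fin: "finite L" and C: "C \<subseteq> L"
    and tau: "inj_on \<tau> C" "\<tau> ` C \<subseteq> L" "\<And>l. l \<in> C \<Longrightarrow> Q l = A (\<tau> l)"
    and inj: "inj_on P L" "inj_on Q (L - C)" and disj: "P ` L \<inter> Q ` (L - C) = {}"
    and pos: "\<And>w. w \<in> P ` L \<union> Q ` (L - C) \<Longrightarrow> 0 < x w" and x: "nonneg x"
  shows "0 \<le> x v + (\<Sum>l\<in>L. e (A l) v + e (B l) v - e (P l) v - e (Q l) v)"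
proof -
  have "(\<Sum>l\<in>C. e (Q l) v) = (\<Sum>l\<in>C. e (A (\<tau> l)) v)"
    using tau(3) by simp
  then have "(\<Sum>l\<in>L. e (Q l) v) = (\<Sum>l\<in>L - C. e (Q l) v) + (\<Sum>l\<in>C. e (A (\<tau> l)) v)"
    using sum.subset_diff[OF C fin, of "\<lambda>l. e (Q l) v"] by simp
  moreover have "(\<Sum>l\<in>C. e (A (\<tau> l)) v) \<le> (\<Sum>l\<in>L. e (A l) v)"
  proof -
    have "(\<Sum>l\<in>C. e (A (\<tau> l)) v) = (\<Sum>k\<in>\<tau> ` C. e (A k) v)"
      using sum.reindex[OF tau(1), of "\<lambda>k. e (A k) v"] by simp
    also have "\<dots> \<le> (\<Sum>l\<in>L. e (A l) v)"
      by (rule sum_mono2[OF fin tau(2)]) (simp add: e_nonneg)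
    finally show ?thesis .
  qed
  moreover have "(\<Sum>l\<in>L. e (P l) v) + (\<Sum>l\<in>L - C. e (Q l) v) \<le> x v"
  proof -
    have "(\<Sum>l\<in>L. e (P l) v) + (\<Sum>l\<in>L - C. e (Q l) v) = (if v \<in> P ` L \<union> Q ` (L - C) then 1 else 0)"
      using sum_e_inj[OF fin inj(1)] sum_e_inj[OF _ inj(2)] fin disj by auto
    moreover have "0 \<le> x v" using x by blast
    ultimately show ?thesis using pos[of v] by (auto split: if_splits)
  qed
  moreover have "0 \<le> (\<Sum>l\<in>L. e (B l) v)"
    by (simp add: sum_nonneg e_nonneg)
  ultimately show ?thesis
    by (simp add: sum.distrib sum_subtractf)
qed

lemma nonneg_add_e_sum_matched:
  fixes A B P F Q :: "'i \<Rightarrow> path"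
  assumes fin: "finite L" and inj: "inj_on P L" "inj_on F L"
    and \<sigma>: "inj_on \<sigma> L" "\<sigma> ` L \<subseteq> L"
    and Q: "\<And>l. Q l = (if F l \<in> P ` L then A (\<sigma> (the_inv_into L P (F l))) else F l)"
    and pos: "\<And>w. w \<in> P ` L \<union> F ` L \<Longrightarrow> 0 < x w" and x: "nonneg x"
  shows "0 \<le> x v + (\<Sum>l\<in>L. e (A l) v + e (B l) v - e (P l) v - e (Q l) v)"
proof -
  define C where "C = {l \<in> L. F l \<in> P ` L}"
  define c where "c l = the_inv_into L P (F l)" for l
  have c: "c l \<in> L" "P (c l) = F l" if "l \<in> C" for l
    using that the_inv_into_into[OF inj(1)] f_the_inv_into_f[OF inj(1)] unfolding C_def c_def by auto
  show ?thesis
  proof (rule nonneg_add_signed_e_sum[where \<tau> = "\<lambda>l. \<sigma> (c l)"])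
    show "finite L" "C \<subseteq> L" using fin by (auto simp: C_def)
    show "inj_on (\<lambda>l. \<sigma> (c l)) C"
    proof (rule inj_onI)
      fix l l' assume l: "l \<in> C" "l' \<in> C" "\<sigma> (c l) = \<sigma> (c l')"
      then have "c l = c l'" using c inj_onD[OF \<sigma>(1)] by metis
      then have "F l = F l'" using c l by metis
      with inj(2) l show "l = l'" unfolding C_def by (auto dest: inj_onD)
    qed
    show "(\<lambda>l. \<sigma> (c l)) ` C \<subseteq> L" using c \<sigma>(2) by auto
    show "Q l = A (\<sigma> (c l))" if "l \<in> C" for l using that Q[of l] by (simp add: C_def c_def)
    show "inj_on P L" by (fact inj(1))
    have Q_F: "Q l = F l" if "l \<in> L - C" for l using that Q[of l] by (simp add: C_def)
    show "inj_on Q (L - C)"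
    proof (rule inj_onI)
      fix l l' assume l: "l \<in> L - C" "l' \<in> L - C" "Q l = Q l'"
      with Q_F have "F l = F l'" by simp
      with inj(2) l show "l = l'" by (auto dest: inj_onD)
    qed
    show "P ` L \<inter> Q ` (L - C) = {}" using Q_F unfolding C_def by auto
    show "0 < x w" if "w \<in> P ` L \<union> Q ` (L - C)" for w
    proof (rule pos)
      show "w \<in> P ` L \<union> F ` L" using that Q_F by auto
    qed
    show "nonneg x" by (fact x)
  qed
qed

lemma init_count_eq_wsum: "init_count S x i = wsum S (initial i) x"
  unfolding init_count_def wsum_def initial_def
  by (simp add: sum.inter_filter[symmetric] if_distrib cong: if_cong)

lemma card_steps_eq:
  "int (card {t\<in>{1,2}. pcomp v t = i \<and> pcomp v (t + 1) = j}) = first_step i j v + second_step i j v"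
proof -
  obtain a b c where v: "v = (a, b, c)" by (cases v) auto
  have "{t\<in>{1::nat,2}. pcomp v t = i \<and> pcomp v (t + 1) = j} =
        (if a = i \<and> b = j then {1} else {}) \<union> (if b = i \<and> c = j then {2} else {})"
    unfolding v by auto
  then show ?thesis unfolding v first_step_def second_step_def by simp
qed

lemma trans_count_eq_wsum: "trans_count S x i j = first_count S x i j + second_count S x i j"
  unfolding trans_count_def card_steps_eq wsum_def by (simp add: distrib_left sum.distrib)

lemma is_move_iff:
  "is_move S z \<longleftrightarrow> supported S z \<and>
     (\<forall>i\<in>states S. wsum S (initial i) z = 0) \<and>
     (\<forall>i\<in>states S. \<forall>j\<in>states S. first_count S z i j + second_count S z i j = 0)"
  unfolding is_move_def same_stat_def init_count_eq_wsum trans_count_eq_wsum wsum_zero by simp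

lemma first_count_pos_imp_ex:
  assumes "0 < first_count S x i j"
  shows "\<exists>c\<in>states S. 0 < x (i, j, c)"
proof -
  obtain v where "v \<in> paths S" "0 < x v * first_step i j v"
    using wsum_pos_imp_ex[OF assms] by blast
  then show ?thesis by (cases v) (auto simp: first_step_def split: if_splits)
qed

lemma second_count_pos_imp_ex:
  assumes "0 < second_count S x i j"
  shows "\<exists>a\<in>states S. 0 < x (a, i, j)"
proof -
  obtain v where "v \<in> paths S" "0 < x v * second_step i j v"
    using wsum_pos_imp_ex[OF assms] by blast
  then show ?thesis by (cases v) (auto simp: second_step_def split: if_splits)
qed

lemma path_le_first_count: "nonneg x \<Longrightarrow> (i, j, c) \<in> paths S \<Longrightarrow> x (i, j, c) \<le> first_count S x i j"
  using wsum_ge_term[of x "first_step i j" "(i, j, c)" S] by (simp add: first_step_def)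

lemma path_le_second_count: "nonneg x \<Longrightarrow> (a, i, j) \<in> paths S \<Longrightarrow> x (a, i, j) \<le> second_count S x i j"
  using wsum_ge_term[of x "second_step i j" "(a, i, j)" S] by (simp add: second_step_def)

lemma first_count_nonneg: "nonneg x \<Longrightarrow> 0 \<le> first_count S x i j"
  by (rule wsum_nonneg) (simp_all add: first_step_def)

lemma second_count_nonneg: "nonneg x \<Longrightarrow> 0 \<le> second_count S x i j"
  by (rule wsum_nonneg) (simp_all add: second_step_def)

lemma sum_first_count_row: "(\<Sum>j\<in>states S. first_count S x i j) = wsum S (initial i) x"
proof -
  have "(\<Sum>j\<in>states S. first_step i j v) = initial i v" if "v \<in> paths S" for v
  proof -
    obtain a b c where "v = (a, b, c)" "b \<in> states S" using \<open>v \<in> paths S\<close> by (cases v) auto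
    then show ?thesis by (cases "a = i") (simp_all add: first_step_def initial_def)
  qed
  then show ?thesis by (simp add: wsum_weight_sum[symmetric] cong: wsum_weight_cong)
qed

lemma sum_first_count_col: "(\<Sum>i\<in>states S. first_count S x i j) = (\<Sum>k\<in>states S. second_count S x j k)"
proof -
  have "(\<Sum>i\<in>states S. first_step i j v) = (\<Sum>k\<in>states S. second_step j k v)" if "v \<in> paths S" for v
  proof -
    obtain a b c where "v = (a, b, c)" "a \<in> states S" "c \<in> states S"
      using \<open>v \<in> paths S\<close> by (cases v) auto
    then show ?thesis by (cases "b = j") (simp_all add: first_step_def second_step_def)
  qed
  then show ?thesis by (simp add: wsum_weight_sum[symmetric] cong: wsum_weight_cong)
qed

lemma total_eq_sum_first_count: "total S x = (\<Sum>i\<in>states S. \<Sum>j\<in>states S. first_count S x i j)"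
proof -
  have "(\<Sum>i\<in>states S. initial i v) = 1" if "v \<in> paths S" for v
  proof -
    obtain a b c where "v = (a, b, c)" "a \<in> states S" using \<open>v \<in> paths S\<close> by (cases v) auto
    then show ?thesis by (simp add: initial_def)
  qed
  then have "total S x = (\<Sum>i\<in>states S. wsum S (initial i) x)"
    by (simp add: wsum_weight_sum[symmetric] cong: wsum_weight_cong)
  then show ?thesis by (simp add: sum_first_count_row)
qed

lemma cont_table_total_eq_0:
  assumes "cont_table S x" and "total S x = 0"
  shows "x = (\<lambda>_. 0)"
proof
  fix w
  have "\<forall>v\<in>paths S. x v = 0"
    using assms unfolding wsum_def cont_table_def by (subst sum_nonneg_eq_0_iff[symmetric]) auto
  moreover have "w \<notin> paths S \<Longrightarrow> x w = 0"
    using assms(1) unfolding cont_table_def supported_def by blast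
  ultimately show "x w = 0" by blast
qed

lemma cont_table_add_move:
  assumes "cont_table S x" and "is_move S z" and "nonneg (\<lambda>v. x v + z v)"
  shows "cont_table S (\<lambda>v. x v + z v)"
  using assms unfolding cont_table_def is_move_def supported_def by simp

lemma same_stat_add_move:
  assumes "same_stat S x y" and "is_move S z"
  shows "same_stat S (\<lambda>v. x v + z v) y"
  using assms unfolding same_stat_def is_move_def init_count_eq_wsum trans_count_eq_wsum wsum_add wsum_zero
  by (simp add: algebra_simps)

lemma swap_path_mem: "w \<in> paths S \<Longrightarrow> w' \<in> paths S \<Longrightarrow> swap_path t w w' \<in> paths S"
  by (cases w; cases w') (auto simp: swap_path_def Let_def)

lemma crossing_swap_is_move:
  assumes "z \<in> crossing_swaps S"
  shows "is_move S z"
proof -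
  obtain w w' t where z: "z = (\<lambda>v. e w v + e w' v - e (swap_path t w w') v - e (swap_path t w' w) v)"
    and w: "w \<in> paths S" "w' \<in> paths S" and t: "t \<in> {1,2,3}" and c: "pcomp w t = pcomp w' t"
    using assms unfolding crossing_swaps_def by blast
  obtain a b c a' b' c' where abc: "w = (a, b, c)" "w' = (a', b', c')"
    by (cases w; cases w') auto
  have sw: "swap_path t w w' \<in> paths S" "swap_path t w' w \<in> paths S"
    using w swap_path_mem by auto
  have wsum_z: "wsum S f z = f w + f w' - f (swap_path t w w') - f (swap_path t w' w)" for f
    unfolding z wsum_diff wsum_add wsum_e[OF w(1)] wsum_e[OF w(2)] wsum_e[OF sw(1)] wsum_e[OF sw(2)] ..
  have "supported S z"
    unfolding supported_def z using w sw e_outside_paths by auto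
  then show ?thesis
    unfolding is_move_iff wsum_z using t c abc
    by (auto simp: swap_path_def Let_def initial_def first_step_def second_step_def)
qed

lemma perm_move_cpred:
  "perm_move m i j a b = (\<lambda>v. \<Sum>l\<in>{1..m}. e (i l, j l, a l) v + e (b l, i l, j (cpred m l)) v
     - e (i l, j (cpred m l), a (cpred m l)) v - e (b l, i l, j l) v)"
  unfolding perm_move_def Let_def cpred_def by (simp add: if_distrib)

context
  fixes S m :: nat and i j a b :: "nat \<Rightarrow> nat"
  assumes m: "1 \<le> m"
    and ranges: "i ` {1..m} \<subseteq> states S" "j ` {1..m} \<subseteq> states S"
      "a ` {1..m} \<subseteq> states S" "b ` {1..m} \<subseteq> states S"
begin

private lemma perm_states:
  assumes "l \<in> {1..m}"
  shows "i l \<in> states S" "j l \<in> states S" "a l \<in> states S" "b l \<in> states S"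
    "j (cpred m l) \<in> states S" "a (cpred m l) \<in> states S"
  using ranges assms cpred_mem[OF m assms] by auto

lemma wsum_perm_move:
  "wsum S f (perm_move m i j a b) = (\<Sum>l\<in>{1..m}. f (i l, j l, a l) + f (b l, i l, j (cpred m l))
     - f (i l, j (cpred m l), a (cpred m l)) - f (b l, i l, j l))"
  unfolding perm_move_cpred wsum_sum[OF finite_atLeastAtMost] wsum_add wsum_diff
  by (intro sum.cong refl) (simp add: wsum_e perm_states)

lemma supported_perm_move: "supported S (perm_move m i j a b)"
  unfolding supported_def perm_move_cpred
proof (intro allI impI sum.neutral ballI)
  fix v l assume v: "v \<notin> paths S" and l: "l \<in> {1..m}"
  have "e w v = 0" if "w \<in> paths S" for w
    using that v by (rule e_outside_paths)
  then show "e (i l, j l, a l) v + e (b l, i l, j (cpred m l)) v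
     - e (i l, j (cpred m l), a (cpred m l)) v - e (b l, i l, j l) v = 0"
    using perm_states[OF l] by simp
qed

lemma perm_move_is_move: "is_move S (perm_move m i j a b)"
proof -
  have initial: "wsum S (initial k) (perm_move m i j a b) = 0" for k
    unfolding wsum_perm_move by (rule sum.neutral) (simp add: initial_def)
  have steps: "first_count S (perm_move m i j a b) p q + second_count S (perm_move m i j a b) p q = 0"
    for p q
  proof -
    define G where "G l = (if j l = p \<and> a l = q then 1 else (0::int))" for l
    have "first_count S (perm_move m i j a b) p q + second_count S (perm_move m i j a b) p q
        = wsum S (\<lambda>v. first_step p q v + second_step p q v) (perm_move m i j a b)"
      by (simp add: wsum_weight_add)
    also have "\<dots> = (\<Sum>l\<in>{1..m}. G l - G (cpred m l))"
      unfolding wsum_perm_move by (intro sum.cong refl) (simp add: first_step_def second_step_def G_def)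
    also have "\<dots> = (\<Sum>l\<in>{1..m}. G l) - (\<Sum>l\<in>{1..m}. G (cpred m l))"
      by (simp add: sum_subtractf)
    also have "(\<Sum>l\<in>{1..m}. G (cpred m l)) = (\<Sum>l\<in>{1..m}. G l)"
      using sum.reindex_bij_betw[OF bij_cpred[OF m], of G] .
    finally show ?thesis by simp
  qed
  show ?thesis
    unfolding is_move_iff using initial steps supported_perm_move by simp
qed

lemma first_count_perm_move:
  assumes inj: "inj_on i {1..m}"
  shows "first_count S (perm_move m i j a b) p q =
    (if \<exists>l\<in>{1..m}. (i l, j l) = (p, q) then 1 else 0) -
    (if \<exists>l\<in>{1..m}. (i l, j (cpred m l)) = (p, q) then 1 else 0)"
proof -
  have count: "(\<Sum>l\<in>{1..m}. if (i l, g l) = (p, q) then 1 else 0) =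
      (if \<exists>l\<in>{1..m}. (i l, g l) = (p, q) then 1 else (0::int))" for g :: "nat \<Rightarrow> nat"
  proof (cases "\<exists>l\<in>{1..m}. (i l, g l) = (p, q)")
    case True
    then obtain l0 where l0: "l0 \<in> {1..m}" "(i l0, g l0) = (p, q)" by blast
    have "(i l, g l) = (p, q) \<longleftrightarrow> l = l0" if "l \<in> {1..m}" for l
      using l0 that inj_onD[OF inj, of l l0] by auto
    then have "(\<Sum>l\<in>{1..m}. if (i l, g l) = (p, q) then 1 else 0) = (\<Sum>l\<in>{1..m}. if l = l0 then 1 else (0::int))"
      by (intro sum.cong refl) simp
    with l0 True show ?thesis by simp
  qed (auto intro: sum.neutral)
  have "first_count S (perm_move m i j a b) p q =
      (\<Sum>l\<in>{1..m}. if (i l, j l) = (p, q) then 1 else 0) -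
      (\<Sum>l\<in>{1..m}. if (i l, j (cpred m l)) = (p, q) then 1 else 0)"
    unfolding wsum_perm_move sum_subtractf[symmetric]
    by (intro sum.cong refl) (simp add: first_step_def)
  then show ?thesis by (simp only: count)
qed

end

lemma perm_moves_are_moves:
  assumes "z \<in> perm_moves S"
  shows "is_move S z"
proof -
  obtain m i j a b where z: "z = perm_move m i j a b" and m: "2 \<le> m"
    and ranges: "i ` {1..m} \<subseteq> states S" "j ` {1..m} \<subseteq> states S"
      "a ` {1..m} \<subseteq> states S" "b ` {1..m} \<subseteq> states S"
    using assms unfolding perm_moves_def mem_Collect_eq by (elim exE conjE) (rule that)
  from m have "1 \<le> m" by simp
  from perm_move_is_move[OF this ranges] show ?thesis unfolding z .
qed

section \<open>Tables with equal transition counts at both times\<close>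

lemma crossing_swap_creates_path:
  assumes x: "cont_table S x" and uvw: "(u, v, w) \<in> paths S"
    and counts: "0 < first_count S x u v" "0 < second_count S x v w"
  obtains x' where "walk (crossing_swaps S) x x'" "cont_table S x'" "1 \<le> x' (u, v, w)"
    "\<And>p q. first_count S x' p q = first_count S x p q"
    "\<And>p q. second_count S x' p q = second_count S x p q"
proof (cases "1 \<le> x (u, v, w)")
  case True
  with x show ?thesis by (intro that[of x]) (auto simp: cont_table_def intro: walk_refl)
next
  case False
  obtain c a where c: "c \<in> states S" "0 < x (u, v, c)" and a: "a \<in> states S" "0 < x (a, v, w)"
    using first_count_pos_imp_ex[OF counts(1)] second_count_pos_imp_ex[OF counts(2)] by blast
  with False have "c \<noteq> w" "a \<noteq> u" by auto
  define z where "z s = e (u, v, w) s + e (a, v, c) s - e (u, v, c) s - e (a, v, w) s" for s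
  have "z \<in> crossing_swaps S"
    unfolding crossing_swaps_def mem_Collect_eq
    by (rule exI[of _ "(u, v, w)"], rule exI[of _ "(a, v, c)"], rule exI[of _ 2])
       (use uvw a c in \<open>auto simp: z_def swap_path_def\<close>)
  then have move: "is_move S z" by (rule crossing_swap_is_move)
  have nonneg: "nonneg (\<lambda>s. x s + z s)"
  proof
    fix s
    have "0 \<le> x s" using x unfolding cont_table_def by blast
    then have "0 \<le> x s - e (u, v, c) s - e (a, v, w) s"
      using c a \<open>c \<noteq> w\<close> unfolding e_def by auto
    then show "0 \<le> x s + z s"
      unfolding z_def using e_nonneg[of "(u, v, w)" s] e_nonneg[of "(a, v, c)" s] by linarith
  qed
  have "wsum S f z = f (u, v, w) + f (a, v, c) - f (u, v, c) - f (a, v, w)" for f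
    unfolding z_def[abs_def] wsum_diff wsum_add using uvw a c by (simp add: wsum_e)
  then have "first_count S z p q = 0" "second_count S z p q = 0" for p q
    by (simp_all add: first_step_def second_step_def)
  moreover have "1 \<le> x (u, v, w) + z (u, v, w)"
    using x \<open>c \<noteq> w\<close> \<open>a \<noteq> u\<close> unfolding z_def e_def cont_table_def by auto
  ultimately show ?thesis
    using walk_move[OF \<open>z \<in> crossing_swaps S\<close> _ nonneg] cont_table_add_move[OF x move nonneg] x
    by (intro that[of "\<lambda>s. x s + z s"]) (auto simp: wsum_add cont_table_def)
qed

lemma walk_of_equal_step_counts:
  "cont_table S x \<Longrightarrow> cont_table S y \<Longrightarrow>
   (\<And>p q. p \<in> states S \<Longrightarrow> q \<in> states S \<Longrightarrow> first_count S x p q = first_count S y p q) \<Longrightarrow>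
   (\<And>p q. p \<in> states S \<Longrightarrow> q \<in> states S \<Longrightarrow> second_count S x p q = second_count S y p q) \<Longrightarrow>
   nat (total S x) = n \<Longrightarrow> walk (crossing_swaps S) x y"
proof (induction n arbitrary: x y)
  case 0
  have "0 \<le> total S x"
    using "0.prems"(1) by (intro wsum_nonneg) (auto simp: cont_table_def)
  with "0.prems"(5) have "total S x = 0" by simp
  moreover have "total S x = total S y"
    using "0.prems"(3) by (simp add: total_eq_sum_first_count)
  ultimately have "x = (\<lambda>_. 0)" "y = (\<lambda>_. 0)"
    using cont_table_total_eq_0 "0.prems"(1,2) by metis+
  then show ?case by (simp add: walk_refl)
next
  case (Suc n x y)
  note x = Suc.prems(1) and y = Suc.prems(2)
  have "total S y = total S x"
    using Suc.prems(3) by (simp add: total_eq_sum_first_count)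
  then have "0 < total S y" using Suc.prems(5) by simp
  then obtain q where q: "q \<in> paths S" "0 < y q"
    using wsum_pos_imp_ex[of S "\<lambda>_. 1" y] by auto
  obtain u v w where "q = (u, v, w)" by (cases q)
  with q have uvw: "(u, v, w) \<in> paths S" "0 < y (u, v, w)" by simp_all
  have "nonneg y" using y by (simp add: cont_table_def)
  from path_le_first_count[OF this uvw(1)] path_le_second_count[OF this uvw(1)]
  have "0 < first_count S y u v" "0 < second_count S y v w" using uvw(2) by linarith+
  moreover have "first_count S x u v = first_count S y u v" "second_count S x v w = second_count S y v w"
    using Suc.prems(3,4) uvw(1) by simp_all
  ultimately have "0 < first_count S x u v" "0 < second_count S x v w" by simp_all
  then obtain x' where x': "walk (crossing_swaps S) x x'" "cont_table S x'" "1 \<le> x' (u, v, w)"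
    "\<And>p q. first_count S x' p q = first_count S x p q" "\<And>p q. second_count S x' p q = second_count S x p q"
    using crossing_swap_creates_path[OF x uvw(1)] by blast
  define x0 where "x0 s = x' s - e (u, v, w) s" for s
  define y0 where "y0 s = y s - e (u, v, w) s" for s
  have cont0: "cont_table S x0" "cont_table S y0"
    using x'(2,3) y uvw unfolding x0_def y0_def cont_table_def supported_def e_def by auto
  have "total S x0 = total S x - 1"
    unfolding x0_def[abs_def] wsum_diff wsum_e[OF uvw(1)] using x'(4) by (simp add: total_eq_sum_first_count)
  then have size0: "nat (total S x0) = n" using Suc.prems(5) by simp
  have counts0: "first_count S x0 p q = first_count S y0 p q" "second_count S x0 p q = second_count S y0 p q"
    if "p \<in> states S" "q \<in> states S" for p q
    using that Suc.prems(3,4) x'(4,5) unfolding x0_def[abs_def] y0_def[abs_def] wsum_diff by simp_all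
  from walk_add[OF Suc.IH[OF cont0 counts0 size0] e_nonneg_all[of "(u, v, w)"]]
  have "walk (crossing_swaps S) x' y"
    unfolding x0_def y0_def by simp
  with x'(1) show ?case by (rule walk_trans)
qed

section \<open>Equalising the time-1 transition counts\<close>

lemma first_count_margins:
  assumes "same_stat S x y"
  shows "\<And>i. i \<in> states S \<Longrightarrow> (\<Sum>j\<in>states S. first_count S y i j - first_count S x i j) = 0"
    and "\<And>j. j \<in> states S \<Longrightarrow> (\<Sum>i\<in>states S. first_count S y i j - first_count S x i j) = 0"
proof -
  have init: "wsum S (initial i) x = wsum S (initial i) y" if "i \<in> states S" for i
    using assms that unfolding same_stat_def init_count_eq_wsum by blast
  have trans: "first_count S x i j + second_count S x i j = first_count S y i j + second_count S y i j"
    if "i \<in> states S" "j \<in> states S" for i j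
    using assms that unfolding same_stat_def trans_count_eq_wsum by blast
  show rows: "(\<Sum>j\<in>states S. first_count S y i j - first_count S x i j) = 0" if "i \<in> states S" for i
    using init[OF that] by (simp add: sum_subtractf sum_first_count_row)
  fix j assume j: "j \<in> states S"
  have "(\<Sum>i\<in>states S. first_count S y i j - first_count S x i j)
      = (\<Sum>k\<in>states S. second_count S y j k - second_count S x j k)"
    by (simp add: sum_subtractf sum_first_count_col)
  also have "\<dots> = (\<Sum>k\<in>states S. - (first_count S y j k - first_count S x j k))"
    using trans[OF j] by (intro sum.cong refl) (simp add: algebra_simps)
  also have "\<dots> = - (\<Sum>k\<in>states S. first_count S y j k - first_count S x j k)"
    by (simp only: sum_negf)
  also have "\<dots> = 0" using rows[OF j] by simp
  finally show "(\<Sum>i\<in>states S. first_count S y i j - first_count S x i j) = 0" .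
qed

lemma first_count_less_imp_ex:
  assumes "nonneg y" and "first_count S y i j < first_count S x i j"
  shows "\<exists>c\<in>states S. 0 < x (i, j, c)"
  using first_count_nonneg[OF assms(1), of S i j] assms(2) by (intro first_count_pos_imp_ex) simp

lemma first_count_greater_imp_ex:
  assumes "same_stat S x y" "nonneg y" "i \<in> states S" "j \<in> states S"
    and "first_count S x i j < first_count S y i j"
  shows "\<exists>a\<in>states S. 0 < x (a, i, j)"
proof (rule second_count_pos_imp_ex)
  have "first_count S x i j + second_count S x i j = first_count S y i j + second_count S y i j"
    using assms(1,3,4) unfolding same_stat_def trans_count_eq_wsum by blast
  with assms(5) second_count_nonneg[OF assms(2), of S i j] show "0 < second_count S x i j" by linarith
qed

lemma alternating_cycle_witnesses:
  assumes same: "same_stat S x y" and y: "nonneg y"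
    and ranges: "i ` {1..m} \<subseteq> states S" "j ` {1..m} \<subseteq> states S"
    and pos: "\<And>l. l \<in> {1..m} \<Longrightarrow> first_count S x (i l) (j l) < first_count S y (i l) (j l)"
    and neg: "\<And>l. l \<in> {1..m} \<Longrightarrow>
      first_count S y (i l) (j (cpred m l)) < first_count S x (i l) (j (cpred m l))"
  obtains \<alpha> \<beta> where "\<alpha> ` {1..m} \<subseteq> states S" "\<beta> ` {1..m} \<subseteq> states S"
    "\<And>l. l \<in> {1..m} \<Longrightarrow> 0 < x (i l, j (cpred m l), \<alpha> l)"
    "\<And>l. l \<in> {1..m} \<Longrightarrow> 0 < x (\<beta> l, i l, j l)"
proof -
  have "\<forall>l\<in>{1..m}. \<exists>c. c \<in> states S \<and> 0 < x (i l, j (cpred m l), c)"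
    using first_count_less_imp_ex[OF y neg] by blast
  from bchoice[OF this] obtain \<alpha> where \<alpha>: "\<forall>l\<in>{1..m}. \<alpha> l \<in> states S \<and> 0 < x (i l, j (cpred m l), \<alpha> l)"
    by blast
  have "\<forall>l\<in>{1..m}. \<exists>c. c \<in> states S \<and> 0 < x (c, i l, j l)"
  proof
    fix l assume l: "l \<in> {1..m}"
    with ranges have "i l \<in> states S" "j l \<in> states S" by auto
    from first_count_greater_imp_ex[OF same y this pos[OF l]]
    show "\<exists>c. c \<in> states S \<and> 0 < x (c, i l, j l)" by blast
  qed
  from bchoice[OF this] obtain \<beta> where \<beta>: "\<forall>l\<in>{1..m}. \<beta> l \<in> states S \<and> 0 < x (\<beta> l, i l, j l)"
    by blast
  from \<alpha> \<beta> show ?thesis by (intro that[of \<alpha> \<beta>]) auto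
qed

lemma perm_move_applicable:
  assumes m: "1 \<le> m" and inj: "inj_on i {1..m}"
    and ranges: "i ` {1..m} \<subseteq> states S" "j ` {1..m} \<subseteq> states S"
      "\<alpha> ` {1..m} \<subseteq> states S" "\<beta> ` {1..m} \<subseteq> states S"
    and pos_P: "\<And>l. l \<in> {1..m} \<Longrightarrow> 0 < x (i l, j (cpred m l), \<alpha> l)"
    and pos_F: "\<And>l. l \<in> {1..m} \<Longrightarrow> 0 < x (\<beta> l, i l, j l)"
    and x: "nonneg x"
  obtains a b where "a ` {1..m} \<subseteq> states S" "b ` {1..m} \<subseteq> states S"
    "nonneg (\<lambda>v. x v + perm_move m i j a b v)"
proof -
  define L where "L = {1..m}"
  define P where "P l = (i l, j (cpred m l), \<alpha> l)" for l
  define F where "F l = (\<beta> l, i l, j l)" for l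
  define c where "c l = the_inv_into L P (F l)" for l
  define a where "a l = \<alpha> (if l = m then 1 else l + 1)" for l
  \<comment> \<open>If the removed path \<open>F l\<close> is also the removed path \<open>P (c l)\<close>, then \<open>b l\<close> is chosen so
    that the path \<open>(b l, i l, j l)\<close> is the added path \<open>A (cpred m (c l))\<close> instead.\<close>
  define b where "b l = (if F l \<in> P ` L then i (cpred m (c l)) else \<beta> l)" for l
  define A where "A l = (i l, j l, a l)" for l
  have inj_i: "l = l'" if "l \<in> L" "l' \<in> L" "i l = i l'" for l l'
    using inj_onD[OF inj that(3)] that(1,2) unfolding L_def .
  have inj_P: "inj_on P L" and inj_F: "inj_on F L"
    using inj_i by (auto intro!: inj_onI simp: P_def F_def)
  have c: "c l \<in> L" "P (c l) = F l" if "F l \<in> P ` L" for l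
    using the_inv_into_into[OF inj_P that] f_the_inv_into_f[OF inj_P that] unfolding c_def by auto
  have a_cpred: "a (cpred m l) = \<alpha> l" if "l \<in> L" for l
    using that m unfolding a_def cpred_def L_def by auto
  have Q: "(b l, i l, j l) = (if F l \<in> P ` L then A (cpred m (c l)) else F l)" for l
  proof (cases "F l \<in> P ` L")
    case True
    from c[OF True] have "j (cpred m (c l)) = i l" "\<alpha> (c l) = j l" by (auto simp: P_def F_def)
    with True a_cpred[OF c(1)[OF True]] show ?thesis by (simp add: A_def b_def)
  qed (simp add: b_def F_def)
  have "0 \<le> x v + perm_move m i j a b v" for v
  proof -
    have "perm_move m i j a b v
        = (\<Sum>l\<in>L. e (A l) v + e (b l, i l, j (cpred m l)) v - e (P l) v - e (b l, i l, j l) v)"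
      unfolding perm_move_cpred A_def P_def using a_cpred by (simp add: L_def)
    also have "0 \<le> x v + \<dots>"
    proof (rule nonneg_add_e_sum_matched[where \<sigma> = "cpred m" and A = A and P = P and F = F])
      show "finite L" "inj_on (cpred m) L" "cpred m ` L \<subseteq> L"
        using bij_cpred[OF m] unfolding L_def bij_betw_def by auto
      show "inj_on P L" by (fact inj_P)
      show "inj_on F L" by (fact inj_F)
      show "(b l, i l, j l) = (if F l \<in> P ` L then A (cpred m (the_inv_into L P (F l))) else F l)" for l
        using Q[of l] unfolding c_def .
      show "nonneg x" by (fact x)
      show "0 < x w" if "w \<in> P ` L \<union> F ` L" for w
        using that pos_P pos_F unfolding P_def F_def L_def by auto
    qed
    finally show ?thesis .
  qed
  moreover have "a ` {1..m} \<subseteq> states S"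
    using ranges(3) m unfolding a_def by (auto simp: image_subset_iff)
  moreover have "b ` {1..m} \<subseteq> states S"
    using ranges(1,4) c cpred_mem[OF m] unfolding b_def L_def by (auto simp: image_subset_iff)
  ultimately show ?thesis by (intro that[of a b]) auto
qed

lemma first_count_perm_move_sign:
  assumes m: "2 \<le> m" and inj: "inj_on i {1..m}" "inj_on j {1..m}"
    and ranges: "i ` {1..m} \<subseteq> states S" "j ` {1..m} \<subseteq> states S"
      "a ` {1..m} \<subseteq> states S" "b ` {1..m} \<subseteq> states S"
  shows "first_count S (perm_move m i j a b) p q =
    (if \<exists>l\<in>{1..m}. (i l, j l) = (p, q) then 1
     else if \<exists>l\<in>{1..m}. (i l, j (cpred m l)) = (p, q) then -1 else 0)"
proof -
  have m1: "1 \<le> m" using m by simp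
  have "(i l, j l) \<noteq> (i l', j (cpred m l'))" if "l \<in> {1..m}" "l' \<in> {1..m}" for l l'
  proof
    assume eq: "(i l, j l) = (i l', j (cpred m l'))"
    with inj(1) that have "l = l'" by (auto dest: inj_onD)
    with eq inj(2) that cpred_mem[OF m1] have "l = cpred m l" by (auto dest: inj_onD)
    with cpred_neq[OF m that(1)] show False by simp
  qed
  then have "\<not> ((\<exists>l\<in>{1..m}. (i l, j l) = (p, q)) \<and> (\<exists>l\<in>{1..m}. (i l, j (cpred m l)) = (p, q)))"
    by metis
  then show ?thesis
    unfolding first_count_perm_move[OF m1 ranges inj(1)] by auto
qed

definition first_defect :: "nat \<Rightarrow> table \<Rightarrow> table \<Rightarrow> int" where
  "first_defect S x y = (\<Sum>(p, q)\<in>states S \<times> states S. \<bar>first_count S y p q - first_count S x p q\<bar>)"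

lemma first_defect_nonneg: "0 \<le> first_defect S x y"
  unfolding first_defect_def by (rule sum_nonneg) auto

lemma first_defect_perm_move_less:
  assumes m: "2 \<le> m" and inj: "inj_on i {1..m}" "inj_on j {1..m}"
    and ranges: "i ` {1..m} \<subseteq> states S" "j ` {1..m} \<subseteq> states S"
      "a ` {1..m} \<subseteq> states S" "b ` {1..m} \<subseteq> states S"
    and pos: "\<And>l. l \<in> {1..m} \<Longrightarrow> first_count S x (i l) (j l) < first_count S y (i l) (j l)"
    and neg: "\<And>l. l \<in> {1..m} \<Longrightarrow>
      first_count S y (i l) (j (cpred m l)) < first_count S x (i l) (j (cpred m l))"
  shows "first_defect S (\<lambda>v. x v + perm_move m i j a b v) y < first_defect S x y"
proof -
  define E where "E pq = first_count S (perm_move m i j a b) (fst pq) (snd pq)" for pq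
  define D where "D pq = first_count S y (fst pq) (snd pq) - first_count S x (fst pq) (snd pq)" for pq
  have sign: "E pq = (if \<exists>l\<in>{1..m}. (i l, j l) = pq then 1
      else if \<exists>l\<in>{1..m}. (i l, j (cpred m l)) = pq then -1 else 0)" for pq
    unfolding E_def first_count_perm_move_sign[OF m inj ranges] by simp
  have cases: "E pq = 0 \<or> (E pq = 1 \<and> 0 < D pq) \<or> (E pq = -1 \<and> D pq < 0)" for pq
  proof (cases "\<exists>l\<in>{1..m}. (i l, j l) = pq")
    case True
    then show ?thesis using pos unfolding sign D_def by auto
  next
    case False
    then show ?thesis using neg unfolding sign D_def by auto
  qed
  have one: "1 \<in> {1..m}" using m by simp
  with ranges have "(i 1, j 1) \<in> states S \<times> states S" by auto
  moreover have "E (i 1, j 1) \<noteq> 0"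
    unfolding sign using one by auto
  ultimately have "(\<Sum>pq\<in>states S \<times> states S. \<bar>D pq - E pq\<bar>) < (\<Sum>pq\<in>states S \<times> states S. \<bar>D pq\<bar>)"
    using cases by (intro sum_abs_diff_less) auto
  then show ?thesis
    unfolding first_defect_def wsum_add D_def E_def by (simp add: case_prod_beta algebra_simps)
qed

lemma perm_move_reduces_first_defect:
  assumes x: "cont_table S x" and y: "cont_table S y" and same: "same_stat S x y"
    and differ: "p \<in> states S" "q \<in> states S" "first_count S x p q \<noteq> first_count S y p q"
  obtains x' where "walk (perm_moves S) x x'" "cont_table S x'" "same_stat S x' y"
    "first_defect S x' y < first_defect S x y"
proof -
  define D where "D i j = first_count S y i j - first_count S x i j" for i j
  have rows: "(\<Sum>j\<in>states S. D i j) = 0" if "i \<in> states S" for i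
    using first_count_margins(1)[OF same that] unfolding D_def .
  have cols: "(\<Sum>i\<in>states S. D i j) = 0" if "j \<in> states S" for j
    using first_count_margins(2)[OF same that] unfolding D_def .
  have "D p q \<noteq> 0" using differ(3) unfolding D_def by simp
  then obtain m i j where m: "2 \<le> m" "m \<le> card (states S)" and inj: "inj_on i {1..m}" "inj_on j {1..m}"
    and ranges: "i ` {1..m} \<subseteq> states S" "j ` {1..m} \<subseteq> states S"
    and pos_D: "\<And>l. l \<in> {1..m} \<Longrightarrow> 0 < D (i l) (j l)"
    and neg_D: "\<And>l. l \<in> {1..m} \<Longrightarrow> D (i l) (j (cpred m l)) < 0"
    using zero_margins_alternating_cycle[OF finite_states rows cols differ(1,2)] by blast
  have pos: "first_count S x (i l) (j l) < first_count S y (i l) (j l)" if "l \<in> {1..m}" for l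
    using pos_D[OF that] unfolding D_def by simp
  have neg: "first_count S y (i l) (j (cpred m l)) < first_count S x (i l) (j (cpred m l))"
    if "l \<in> {1..m}" for l
    using neg_D[OF that] unfolding D_def by simp
  have "nonneg y" using y by (simp add: cont_table_def)
  then obtain \<alpha> \<beta> where \<alpha>\<beta>: "\<alpha> ` {1..m} \<subseteq> states S" "\<beta> ` {1..m} \<subseteq> states S"
    "\<And>l. l \<in> {1..m} \<Longrightarrow> 0 < x (i l, j (cpred m l), \<alpha> l)" "\<And>l. l \<in> {1..m} \<Longrightarrow> 0 < x (\<beta> l, i l, j l)"
    using alternating_cycle_witnesses[OF same _ ranges pos neg] by blast
  have "1 \<le> m" and x_nonneg: "nonneg x" using m(1) x by (simp_all add: cont_table_def)
  obtain a b where ab: "a ` {1..m} \<subseteq> states S" "b ` {1..m} \<subseteq> states S"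
    "nonneg (\<lambda>v. x v + perm_move m i j a b v)"
    using perm_move_applicable[OF \<open>1 \<le> m\<close> inj(1) ranges \<alpha>\<beta> x_nonneg] by blast
  have "m \<le> S" using m(2) by (simp add: states_def)
  then have move: "perm_move m i j a b \<in> perm_moves S"
    using m(1) inj ranges ab(1,2) unfolding perm_moves_def by blast
  show ?thesis
  proof (rule that)
    show "walk (perm_moves S) x (\<lambda>v. x v + perm_move m i j a b v)"
      using move x_nonneg ab(3) by (rule walk_move)
    show "cont_table S (\<lambda>v. x v + perm_move m i j a b v)"
      using cont_table_add_move[OF x perm_moves_are_moves[OF move] ab(3)] .
    show "same_stat S (\<lambda>v. x v + perm_move m i j a b v) y"
      using same_stat_add_move[OF same perm_moves_are_moves[OF move]] .
    show "first_defect S (\<lambda>v. x v + perm_move m i j a b v) y < first_defect S x y"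
      using first_defect_perm_move_less[OF m(1) inj ranges ab(1,2) pos neg] .
  qed
qed

lemma walk_to_equal_first_counts:
  assumes "cont_table S x" "cont_table S y" "same_stat S x y"
  shows "\<exists>x'. walk (perm_moves S) x x' \<and> cont_table S x' \<and> same_stat S x' y \<and>
    (\<forall>p\<in>states S. \<forall>q\<in>states S. first_count S x' p q = first_count S y p q)"
  using assms
proof (induction "nat (first_defect S x y)" arbitrary: x rule: less_induct)
  case less
  show ?case
  proof (cases "\<forall>p\<in>states S. \<forall>q\<in>states S. first_count S x p q = first_count S y p q")
    case True
    with less.prems show ?thesis
      by (intro exI[of _ x]) (auto simp: cont_table_def intro: walk_refl)
  next
    case False
    then obtain p q where "p \<in> states S" "q \<in> states S" "first_count S x p q \<noteq> first_count S y p q"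
      by blast
    then obtain x' where x': "walk (perm_moves S) x x'" "cont_table S x'" "same_stat S x' y"
      "first_defect S x' y < first_defect S x y"
      using perm_move_reduces_first_defect[OF less.prems] by blast
    then have "nat (first_defect S x' y) < nat (first_defect S x y)"
      using first_defect_nonneg[of S x' y] by linarith
    from less.hyps[OF this x'(2) less.prems(2) x'(3)] x'(1) show ?thesis
      by (blast intro: walk_trans)
  qed
qed

lemma walk_of_same_stat:
  assumes "cont_table S x" "cont_table S y" "same_stat S x y"
  shows "walk (crossing_swaps S \<union> perm_moves S) x y"
proof -
  obtain x' where x': "walk (perm_moves S) x x'" "cont_table S x'" "same_stat S x' y"
    "\<And>p q. p \<in> states S \<Longrightarrow> q \<in> states S \<Longrightarrow> first_count S x' p q = first_count S y p q"
    using walk_to_equal_first_counts[OF assms] by blast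
  have "second_count S x' p q = second_count S y p q" if "p \<in> states S" "q \<in> states S" for p q
  proof -
    have "first_count S x' p q + second_count S x' p q = first_count S y p q + second_count S y p q"
      using x'(3) that unfolding same_stat_def trans_count_eq_wsum by blast
    with x'(4)[OF that] show ?thesis by simp
  qed
  with x'(2,4) assms(2) have "walk (crossing_swaps S) x' y"
    using walk_of_equal_step_counts by blast
  with x'(1) show ?thesis
    by (meson walk_mono walk_trans sup_ge1 sup_ge2)
qed

theorem theorem2:
  fixes S :: nat
  assumes "2 \<le> S"
  shows "markov_basis S (crossing_swaps S \<union> perm_moves S)"
proof -
  have "\<forall>z\<in>crossing_swaps S \<union> perm_moves S. is_move S z"
    using crossing_swap_is_move perm_moves_are_moves by blast
  moreover have "\<exists>zs. set zs \<subseteq> crossing_swaps S \<union> perm_moves S \<and>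
      (\<forall>w. y w = x w + (\<Sum>k<length zs. (zs ! k) w)) \<and>
      (\<forall>h\<le>length zs. \<forall>w. 0 \<le> x w + (\<Sum>k<h. (zs ! k) w))"
    if "cont_table S x" "cont_table S y" "same_stat S x y" for x y
    using walk_imp_move_sequence[OF walk_of_same_stat[OF that]] .
  ultimately show ?thesis
    unfolding markov_basis_def by (meson le_supI1)
qed

end
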